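(* For any integer $k\ge0$, any $\alpha=\frac{p}{q}$ and any $\lambda\in\mathbb{R}$, $$\operatorname{tr}H^{2k+1}_{\alpha,\lambda,\frac12}R_{\frac12}=-\operatorname{tr}H^{2k+1}_{\alpha,\lambda,0}R_0,\qquad \operatorname{tr}H^{2k+1}_{\alpha,\lambda,\frac\alpha2}R_{\frac\alpha2}=\operatorname{tr}H^{2k+1}_{\alpha,\lambda,\frac{1+\alpha}2}R_{\frac{1+\alpha}2}.$$
   Context: For $\alpha,\lambda,\theta\in\mathbb{R}$, $H_{\alpha,\lambda,\theta}$ on $\ell^2(\mathbb{Z})$ is $(H\psi)_n=\psi_{n+1}+\psi_{n-1}+2\lambda\cos(2\pi(n\alpha+\theta))\psi_n$; $A_{ij}$ denotes matrix entries in the standard basis. $R_0=R_{1/2}:(\psi_n)\mapsto(\psi_{-n})$ and $R_{\alpha/2}=R_{(1+\alpha)/2}:(\psi_n)\mapsto(\psi_{-1-n})$. The traces are defined as $\operatorname{tr}AR_\theta=\sum_{j\in\mathbb{Z}}A_{j,-j}$ for $\theta\in\{0,\frac12\}$ and $\sum_{j\in\mathbb{Z}}A_{j,-1-j}$ for $\theta\in\{\frac\alpha2,\frac{1+\alpha}2\}$, with $A=H^{2k+1}_{\alpha,\lambda,\theta}$ (finitely many nonzero terms). *)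

theory Defs
  imports "HOL-Analysis.Analysis"
begin

text \<open>Matrix entries (standard basis of l2(Z)) of the almost Mathieu operator
  (H psi)_n = psi_(n+1) + psi_(n-1) + 2 lam cos(2 pi (n alpha + theta)) psi_n.\<close>
definition Hmat :: "real \<Rightarrow> real \<Rightarrow> real \<Rightarrow> int \<Rightarrow> int \<Rightarrow> real" where
  "Hmat \<alpha> lam \<theta> i j =
     (if i = j then 2 * lam * cos (2 * pi * (real_of_int i * \<alpha> + \<theta>))
      else if \<bar>i - j\<bar> = 1 then 1 else 0)"

text \<open>Matrix entries of H^m. Since H is tridiagonal, the matrix product
  (H^m H)_(i,j) = sum_l (H^m)_(i,l) H_(l,j) only has the terms l in {j-1..j+1}.\<close>
fun Hpow :: "real \<Rightarrow> real \<Rightarrow> real \<Rightarrow> nat \<Rightarrow> int \<Rightarrow> int \<Rightarrow> real" where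
  "Hpow \<alpha> lam \<theta> 0 i j = (if i = j then 1 else 0)"
| "Hpow \<alpha> lam \<theta> (Suc m) i j =
     (\<Sum>l\<in>{j-1..j+1}. Hpow \<alpha> lam \<theta> m i l * Hmat \<alpha> lam \<theta> l j)"

text \<open>tr A R_0 = tr A R_(1/2) = sum_j A_(j,-j)\<close>
definition trR0 :: "(int \<Rightarrow> int \<Rightarrow> real) \<Rightarrow> real" where
  "trR0 A = (\<Sum>\<^sub>\<infinity>j\<in>(UNIV::int set). A j (- j))"

text \<open>tr A R_(alpha/2) = tr A R_((1+alpha)/2) = sum_j A_(j,-1-j)\<close>
definition trR1 :: "(int \<Rightarrow> int \<Rightarrow> real) \<Rightarrow> real" where
  "trR1 A = (\<Sum>\<^sub>\<infinity>j\<in>(UNIV::int set). A j (- 1 - j))"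

end

theory Submission
  imports Defs
begin

text \<open>Shifting the phase by 1/2 flips the sign of the potential. Conjugating by the unitary
  U = diag((-1)^n), which flips the sign of the hopping terms, therefore gives
  H_(theta+1/2) = - U H_theta U, hence (H_(theta+1/2)^m)_(i,j) = (-1)^(m+i+j) (H_theta^m)_(i,j).
  The traces against R_0 only see entries with i + j = 0 and those against R_(alpha/2)
  only entries with i + j = -1, which gives the two identities for odd m; the phases
  1/2 and (1+alpha)/2 are the phases 0 and alpha/2 shifted by 1/2.\<close>

definition parity_sign :: "int \<Rightarrow> real" where
  "parity_sign i = (if even i then 1 else -1)"

lemma parity_sign_mult_self: "parity_sign i * parity_sign i = 1"
  by (simp add: parity_sign_def)

lemma parity_sign_mult_adjacent:
  assumes "\<bar>i - j\<bar> = 1"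
  shows "parity_sign i * parity_sign j = -1"
proof -
  from assms have "i = j + 1 \<or> i = j - 1"
    by linarith
  then show ?thesis
    by (auto simp: parity_sign_def)
qed

lemma parity_sign_mult_neg: "parity_sign i * parity_sign (- i) = 1"
  by (simp add: parity_sign_def)

lemma parity_sign_mult_neg_minus_one: "parity_sign i * parity_sign (- 1 - i) = -1"
  by (simp add: parity_sign_def)

lemma cos_two_pi_add_half: "cos (2 * pi * (x + 1/2)) = - cos (2 * pi * x)"
proof -
  have "2 * pi * (x + 1/2) = 2 * pi * x + pi"
    by (simp add: algebra_simps)
  then show ?thesis
    by (simp add: cos_add)
qed

lemma Hmat_phase_add_half:
  "Hmat \<alpha> lam (\<theta> + 1/2) i j = - parity_sign i * parity_sign j * Hmat \<alpha> lam \<theta> i j"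
proof (cases "i = j")
  case True
  then show ?thesis
    using cos_two_pi_add_half[of "real_of_int i * \<alpha> + \<theta>", unfolded add.assoc]
    by (simp add: Hmat_def parity_sign_def)
next
  case False
  then show ?thesis
    using parity_sign_mult_adjacent[of i j] by (simp add: Hmat_def)
qed

lemma Hpow_phase_add_half:
  "Hpow \<alpha> lam (\<theta> + 1/2) m i j = (-1) ^ m * parity_sign i * parity_sign j * Hpow \<alpha> lam \<theta> m i j"
proof (induction m arbitrary: j)
  case 0
  show ?case
    by (simp add: parity_sign_mult_self)
next
  case (Suc m)
  have "Hpow \<alpha> lam (\<theta> + 1/2) (Suc m) i j
     = (\<Sum>l\<in>{j-1..j+1}. ((-1) ^ m * parity_sign i * parity_sign l * Hpow \<alpha> lam \<theta> m i l)
                        * (- parity_sign l * parity_sign j * Hmat \<alpha> lam \<theta> l j))"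
    by (simp add: Suc.IH Hmat_phase_add_half)
  also have "\<dots> = (\<Sum>l\<in>{j-1..j+1}. (-1) ^ Suc m * parity_sign i * parity_sign j
                        * (Hpow \<alpha> lam \<theta> m i l * Hmat \<alpha> lam \<theta> l j) * (parity_sign l * parity_sign l))"
    by (rule sum.cong) (simp_all add: algebra_simps)
  also have "\<dots> = (-1) ^ Suc m * parity_sign i * parity_sign j * Hpow \<alpha> lam \<theta> (Suc m) i j"
    by (simp add: parity_sign_mult_self sum_distrib_left mult.assoc)
  finally show ?case .
qed

lemma trR0_Hpow_phase_add_half:
  "trR0 (Hpow \<alpha> lam (\<theta> + 1/2) m) = (-1) ^ m * trR0 (Hpow \<alpha> lam \<theta> m)"
  by (simp del: Hpow.simps add: trR0_def Hpow_phase_add_half parity_sign_mult_neg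
      mult.assoc infsum_cmult_right')

lemma trR1_Hpow_phase_add_half:
  "trR1 (Hpow \<alpha> lam (\<theta> + 1/2) m) = (-1) ^ Suc m * trR1 (Hpow \<alpha> lam \<theta> m)"
  by (simp del: Hpow.simps add: trR1_def Hpow_phase_add_half parity_sign_mult_neg_minus_one
      mult.assoc infsum_cmult_right' infsum_uminus)

theorem lemmap:
  fixes k :: nat and p q :: int and lam :: real
  assumes "q \<noteq> 0"
  defines "\<alpha> \<equiv> real_of_int p / real_of_int q"
  shows "trR0 (Hpow \<alpha> lam (1/2) (2*k+1)) = - trR0 (Hpow \<alpha> lam 0 (2*k+1))
       \<and> trR1 (Hpow \<alpha> lam (\<alpha>/2) (2*k+1)) = trR1 (Hpow \<alpha> lam ((1+\<alpha>)/2) (2*k+1))"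
proof
  show "trR0 (Hpow \<alpha> lam (1/2) (2*k+1)) = - trR0 (Hpow \<alpha> lam 0 (2*k+1))"
    using trR0_Hpow_phase_add_half[of \<alpha> lam 0 "2*k+1"] by (simp del: Hpow.simps)
  have phase: "(1+\<alpha>)/2 = \<alpha>/2 + 1/2"
    by (simp add: field_simps)
  show "trR1 (Hpow \<alpha> lam (\<alpha>/2) (2*k+1)) = trR1 (Hpow \<alpha> lam ((1+\<alpha>)/2) (2*k+1))"
    unfolding phase using trR1_Hpow_phase_add_half[of \<alpha> lam "\<alpha>/2" "2*k+1"] by (simp del: Hpow.simps)
qed

end
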